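(* Let $n$ be even, let $j$ be a positive integer with $\eta := j/n \leq 1/10$, let $H = J(n,n/2,j)$, let $d = {n/2 \choose j}^2$, and let $\tilde{\mu}_2$ be the second smallest eigenvalue (counted with multiplicity) of the normalised Laplacian $I - A_H/d$ of $H$, where $A_H$ is the adjacency matrix of $H$. Then for every $\mathcal{A} \subset {[n] \choose n/2}$, $$\left|\left\{(A,B) \in {[n] \choose n/2}^2:\ |A \Delta B| = 2j,\ A \in \mathcal{A},\ B \notin \mathcal{A}\right\}\right| = e_H(\mathcal{A},\mathcal{A}^c) \geq d\, \tilde{\mu}_2\, \mu(\mathcal{A})(1-\mu(\mathcal{A})){n \choose n/2} \geq \tfrac{1}{2}\eta\, \mu(\mathcal{A})(1-\mu(\mathcal{A}))\, d{n \choose n/2},$$ and consequently $$\frac{\left|\left\{(A,B) \in {[n] \choose n/2}^2:\ |A \Delta B| = 2j,\ A \in \mathcal{A},\ B \notin \mathcal{A}\right\}\right|}{\left|\left\{(A,B) \in {[n] \choose n/2}^2:\ |A \Delta B| = 2j\right\}\right|} \geq \tfrac{1}{2}\eta\, \mu(\mathcal{A})(1-\mu(\mathcal{A})).$$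
   Context: For $1 \leq j \leq k \leq n$, the Johnson graph $J(n,k,j)$ has vertex set ${[n] \choose k}$ (the $k$-element subsets of $[n]=\{1,\dots,n\}$), with two $k$-sets adjacent iff their symmetric difference has size $2j$; $J(n,n/2,j)$ is $d$-regular with $d={n/2 \choose j}^2$. $e_H(\mathcal{A},\mathcal{A}^c)$ denotes the number of edges of $H$ with one endpoint in $\mathcal{A}$ and the other in $\mathcal{A}^c = {[n] \choose n/2}\setminus\mathcal{A}$. $\mu(\mathcal{A}) = |\mathcal{A}|/{n \choose n/2}$. *)

theory Defs
  imports Complex_Main "HOL-Computational_Algebra.Polynomial" "HOL-Combinatorics.Permutations"
    "HOL-Library.Multiset"
begin

definition johnson_vertices :: "nat \<Rightarrow> nat \<Rightarrow> nat set set" where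
  "johnson_vertices n k = {A. A \<subseteq> {1..n} \<and> card A = k}"

definition symdiff :: "'a set \<Rightarrow> 'a set \<Rightarrow> 'a set" where
  "symdiff A B = (A - B) \<union> (B - A)"

definition johnson_adj :: "nat \<Rightarrow> nat set \<Rightarrow> nat set \<Rightarrow> bool" where
  "johnson_adj j A B \<longleftrightarrow> card (symdiff A B) = 2 * j"

definition johnson_edges :: "nat \<Rightarrow> nat \<Rightarrow> nat \<Rightarrow> nat set set set" where
  "johnson_edges n k j = {{A, B} | A B. A \<in> johnson_vertices n k \<and> B \<in> johnson_vertices n k \<and> johnson_adj j A B}"

definition johnson_e :: "nat \<Rightarrow> nat \<Rightarrow> nat \<Rightarrow> nat set set \<Rightarrow> nat set set \<Rightarrow> nat" where
  "johnson_e n k j S T = card {e \<in> johnson_edges n k j. \<exists>A\<in>S. \<exists>B\<in>T. e = {A, B}}"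

definition johnson_adjmat :: "nat \<Rightarrow> nat set \<Rightarrow> nat set \<Rightarrow> real" where
  "johnson_adjmat j A B = (if johnson_adj j A B then 1 else 0)"

text \<open>Characteristic polynomial det(x I - M) of a square matrix M indexed by a finite set V,
  written out via the Leibniz formula.\<close>
definition charpoly_on :: "'a set \<Rightarrow> ('a \<Rightarrow> 'a \<Rightarrow> real) \<Rightarrow> real poly" where
  "charpoly_on V M = (\<Sum>p | p permutes V. of_int (sign p) *
      (\<Prod>v\<in>V. [: - M v (p v), (if p v = v then 1 else 0) :]))"

definition eigenvalues_sorted :: "'a set \<Rightarrow> ('a \<Rightarrow> 'a \<Rightarrow> real) \<Rightarrow> real list" where
  "eigenvalues_sorted V M = sorted_list_of_multiset (proots (charpoly_on V M))"

definition johnson_norm_laplacian :: "nat \<Rightarrow> nat \<Rightarrow> nat set \<Rightarrow> nat set \<Rightarrow> real" where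
  "johnson_norm_laplacian n j A B =
     (if A = B then 1 else 0) - johnson_adjmat j A B / real (((n div 2) choose j)^2)"

definition mu2_tilde :: "nat \<Rightarrow> nat \<Rightarrow> real" where
  "mu2_tilde n j = eigenvalues_sorted (johnson_vertices n (n div 2)) (johnson_norm_laplacian n j) ! 1"

end

theory Submission
  imports Defs "Jordan_Normal_Form.Schur_Decomposition"
begin

text \<open>
  For a \<open>d\<close>-regular graph on \<open>N\<close> vertices, the normalised Laplacian \<open>L = I - A/d\<close> satisfies
  \<open>\<langle>f, L f\<rangle> = e(\<A>, \<A>\<^sup>c) / d\<close> for the centred indicator \<open>f = 1\<^sub>\<A> - \<mu>\<close>. As \<open>f\<close> is
  orthogonal to the constants, which span the kernel of \<open>L\<close>, expanding \<open>f\<close> in an orthonormal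
  eigenbasis gives \<open>e(\<A>, \<A>\<^sup>c) \<ge> d \<mu>\<^sub>2 \<parallel>f\<parallel>\<^sup>2 = d \<mu>\<^sub>2 \<mu> (1 - \<mu>) N\<close>.

  The spectral gap \<open>\<mu>\<^sub>2 \<ge> j/(4k) = \<eta>/2\<close> of \<open>J(2k, k, j)\<close> comes from a maximum principle. Let
  \<open>u\<close> be an eigenfunction of \<open>L\<close> with eigenvalue \<open>e < j/(4k)\<close>, and let \<open>X\<close> and \<open>Y = \<tau> X\<close>,
  for a transposition \<open>\<tau>\<close> of two points \<open>a\<close> and \<open>b\<close>, maximise \<open>|u X - u Y| = M\<close>. Since \<open>\<tau>\<close> maps
  the neighbours of \<open>X\<close> onto those of \<open>Y\<close>, \<open>d (1 - e) (u X - u Y) = \<Sum>\<^sub>Z (u Z - u (\<tau> Z))\<close>,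
  summed over the neighbours \<open>Z\<close> of \<open>X\<close>. Only the \<open>Z\<close> containing exactly one of \<open>a\<close>, \<open>b\<close>
  contribute, each at most \<open>M\<close>, and when \<open>j \<le> n/10\<close> there are at most \<open>(1 - j/(4k)) d\<close> of them.
  Hence \<open>M = 0\<close>: \<open>u\<close> is invariant under transpositions, so it is constant. Two orthonormal
  eigenfunctions cannot both be constant, so the second eigenvalue is at least \<open>j/(4k)\<close>.
\<close>

section \<open>Orthogonal diagonalisation of real symmetric matrices\<close>

lemma real_scalar_prod_self_nonneg: "0 \<le> (v :: real vec) \<bullet> v"
  by (simp add: scalar_prod_def sum_nonneg)

lemma orthogonal_basis_with_head:
  fixes v :: "real vec"
  assumes v: "v \<in> carrier_vec n" and v0: "v \<noteq> 0\<^sub>v n"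
  shows "\<exists>ws. set ws \<subseteq> carrier_vec n \<and> corthogonal ws \<and> length ws = n \<and> ws ! 0 = v"
proof -
  interpret cof_vec_space n "TYPE(real)" .
  define b where "b = basis_completion v"
  from basis_completion[OF v v0, folded b_def]
  have b: "set b \<subseteq> carrier_vec n" "distinct b" "\<not> lin_dep (set b)" "hd b = v" "length b = n"
    by auto
  have "n > 0" using v v0 by (cases n) auto
  with b obtain vs where bv: "b = v # vs" by (cases b) auto
  define ws where "ws = gram_schmidt n b"
  from gram_schmidt_result[OF b(1-3) refl, folded ws_def] b(5)
  have "set ws \<subseteq> carrier_vec n" "corthogonal ws" "length ws = n" by auto
  moreover have "ws ! 0 = v"
    using gram_schmidt_hd[OF v, of vs, folded bv ws_def] \<open>length ws = n\<close> \<open>n > 0\<close>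
    by (cases ws) auto
  ultimately show ?thesis by blast
qed

lemma orthogonal_mat_with_first_col:
  fixes v :: "real vec"
  assumes v: "v \<in> carrier_vec n" and v1: "v \<bullet> v = 1"
  shows "\<exists>W \<in> carrier_mat n n. transpose_mat W * W = 1\<^sub>m n \<and> col W 0 = v"
proof -
  have "v \<noteq> 0\<^sub>v n" using v1 v by auto
  then obtain ws where ws: "set ws \<subseteq> carrier_vec n" "corthogonal ws" "length ws = n"
    and ws0: "ws ! 0 = v"
    using orthogonal_basis_with_head[OF v] by blast
  have wsc: "ws ! i \<in> carrier_vec n" if "i < n" for i using ws that by auto
  have orth: "ws ! i \<bullet> ws ! j = 0 \<longleftrightarrow> i \<noteq> j" if "i < n" "j < n" for i j
    using corthogonalD[OF ws(2), of i j] that ws(3) by simp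
  define nm where "nm i = sqrt (ws ! i \<bullet> ws ! i)" for i
  have nm0: "nm i > 0" if "i < n" for i
    using orth[OF that that] real_scalar_prod_self_nonneg[of "ws ! i"] unfolding nm_def by auto
  define W where "W = mat n n (\<lambda>(i, j). (ws ! j) $ i / nm j)"
  have W: "W \<in> carrier_mat n n" unfolding W_def by auto
  have "transpose_mat W * W = 1\<^sub>m n"
  proof (rule eq_matI)
    fix i j assume "i < dim_row (1\<^sub>m n)" and "j < dim_col (1\<^sub>m n)"
    hence i: "i < n" and j: "j < n" by auto
    have "(transpose_mat W * W) $$ (i, j) = (ws ! i \<bullet> ws ! j) / (nm i * nm j)"
      using i j wsc[OF i] wsc[OF j] unfolding W_def
      by (simp add: scalar_prod_def sum_divide_distrib)
    also have "\<dots> = 1\<^sub>m n $$ (i, j)"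
      using orth[OF i j] nm0[OF i] real_scalar_prod_self_nonneg[of "ws ! i"] i j
      unfolding nm_def by (auto simp: real_sqrt_mult[symmetric])
    finally show "(transpose_mat W * W) $$ (i, j) = 1\<^sub>m n $$ (i, j)" .
  qed (use W in auto)
  moreover have "col W 0 = v"
    using v v1 ws0 unfolding W_def nm_def by (intro eq_vecI) auto
  ultimately show ?thesis using W by blast
qed

lemma unit_eigenvector:
  fixes A :: "real mat"
  assumes A: "A \<in> carrier_mat n n" and ev: "eigenvalue A e"
  shows "\<exists>v \<in> carrier_vec n. v \<bullet> v = 1 \<and> A *\<^sub>v v = e \<cdot>\<^sub>v v"
proof -
  obtain w where "eigenvector A w e" using ev unfolding eigenvalue_def by blast
  hence w: "w \<in> carrier_vec n" and w0: "w \<noteq> 0\<^sub>v n" and Aw: "A *\<^sub>v w = e \<cdot>\<^sub>v w"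
    using A unfolding eigenvector_def by auto
  have "w \<bullet> w \<noteq> 0" using w w0 conjugate_square_eq_0_vec[of w n] by auto
  hence pos: "w \<bullet> w > 0" using real_scalar_prod_self_nonneg[of w] by linarith
  define v where "v = (1 / sqrt (w \<bullet> w)) \<cdot>\<^sub>v w"
  have "v \<in> carrier_vec n" unfolding v_def using w by auto
  moreover have "v \<bullet> v = 1" unfolding v_def using w pos
    by (simp add: smult_scalar_prod_distrib scalar_prod_smult_distrib)
  moreover have "A *\<^sub>v v = e \<cdot>\<^sub>v v" unfolding v_def using Aw A w
    by (simp add: mult_mat_vec smult_smult_assoc mult.commute)
  ultimately show ?thesis by blast
qed

lemma symmetric_mat_first_col_block:
  fixes A :: "'a :: comm_ring_1 mat"
  assumes A: "A \<in> carrier_mat (Suc m) (Suc m)" and sym: "transpose_mat A = A"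
    and col0: "\<And>i. i < Suc m \<Longrightarrow> A $$ (i, 0) = (if i = 0 then e else 0)"
  defines "B \<equiv> mat m m (\<lambda>(i, j). A $$ (Suc i, Suc j))"
  shows "A = four_block_mat (mat 1 1 (\<lambda>_. e)) (0\<^sub>m 1 m) (0\<^sub>m m 1) B"
    and "transpose_mat B = B"
proof -
  have entry_sym: "A $$ (i, j) = A $$ (j, i)" if "i < Suc m" "j < Suc m" for i j
    using arg_cong[OF sym, of "\<lambda>M. M $$ (j, i)"] that A by auto
  show "A = four_block_mat (mat 1 1 (\<lambda>_. e)) (0\<^sub>m 1 m) (0\<^sub>m m 1) B"
    by (rule eq_matI) (use A col0 entry_sym in \<open>auto simp: B_def\<close>)
  show "transpose_mat B = B"
    by (rule eq_matI) (auto simp: B_def entry_sym)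
qed

lemma orthogonal_deflation:
  fixes A :: "real mat"
  assumes A: "A \<in> carrier_mat (Suc m) (Suc m)" and sym: "transpose_mat A = A"
    and ev: "eigenvalue A e"
  shows "\<exists>W B. W \<in> carrier_mat (Suc m) (Suc m) \<and> transpose_mat W * W = 1\<^sub>m (Suc m)
    \<and> B \<in> carrier_mat m m \<and> transpose_mat B = B
    \<and> transpose_mat W * A * W = four_block_mat (mat 1 1 (\<lambda>_. e)) (0\<^sub>m 1 m) (0\<^sub>m m 1) B"
proof -
  let ?n = "Suc m"
  obtain v where v: "v \<in> carrier_vec ?n" and v1: "v \<bullet> v = 1" and Av: "A *\<^sub>v v = e \<cdot>\<^sub>v v"
    using unit_eigenvector[OF A ev] by blast
  obtain W where W: "W \<in> carrier_mat ?n ?n" and WtW: "transpose_mat W * W = 1\<^sub>m ?n"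
    and W0: "col W 0 = v"
    using orthogonal_mat_with_first_col[OF v v1] by blast
  define A' where "A' = transpose_mat W * A * W"
  have A': "A' \<in> carrier_mat ?n ?n" unfolding A'_def using A W by auto
  have "transpose_mat A' = transpose_mat (transpose_mat W * (A * W))"
    unfolding A'_def using A W by (simp add: assoc_mult_mat[of _ ?n ?n _ ?n _ ?n])
  also have "\<dots> = transpose_mat W * transpose_mat A * W"
    using A W by (simp add: transpose_mult[of _ ?n ?n _ ?n])
  finally have symA': "transpose_mat A' = A'" unfolding A'_def sym .
  have col0: "A' $$ (i, 0) = (if i = 0 then e else 0)" if i: "i < ?n" for i
  proof -
    have "A' $$ (i, 0) = row (transpose_mat W) i \<bullet> (A *\<^sub>v col W 0)"
      unfolding A'_def using A W i
      by (simp add: assoc_mult_mat[of _ ?n ?n _ ?n _ ?n] col_mult2 mult_mat_vec_def)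
    also have "\<dots> = e * (transpose_mat W * W) $$ (i, 0)"
      unfolding Av[folded W0] using W i by simp
    finally show ?thesis unfolding WtW using i by simp
  qed
  define B where "B = mat m m (\<lambda>(i, j). A' $$ (Suc i, Suc j))"
  have "A' = four_block_mat (mat 1 1 (\<lambda>_. e)) (0\<^sub>m 1 m) (0\<^sub>m m 1) B" "transpose_mat B = B"
    using symmetric_mat_first_col_block[OF A' symA' col0] unfolding B_def by auto
  with W WtW show ?thesis unfolding A'_def by (intro exI[of _ W] exI[of _ B]) (auto simp: B_def)
qed

lemma mult_block_diag_mat:
  assumes "A1 \<in> carrier_mat n1 n1" "A2 \<in> carrier_mat n2 n2"
    and "B1 \<in> carrier_mat n1 n1" "B2 \<in> carrier_mat n2 n2"
  shows "four_block_mat A1 (0\<^sub>m n1 n2) (0\<^sub>m n2 n1) A2 * four_block_mat B1 (0\<^sub>m n1 n2) (0\<^sub>m n2 n1) B2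
    = four_block_mat (A1 * B1) (0\<^sub>m n1 n2) (0\<^sub>m n2 n1) (A2 * B2)"
  using assms by (subst mult_four_block_mat[of _ n1 n1 _ n2 _ n2 _ _ n1 _ n2]) auto
lemma char_poly_orthogonal_conj:
  fixes A W :: "real mat"
  assumes A: "A \<in> carrier_mat n n" and W: "W \<in> carrier_mat n n" and WtW: "transpose_mat W * W = 1\<^sub>m n"
  shows "char_poly (transpose_mat W * A * W) = char_poly A"
proof (rule char_poly_similar)
  have "W * transpose_mat W = 1\<^sub>m n" using mat_mult_left_right_inverse[OF _ W WtW] W by auto
  thus "similar_mat (transpose_mat W * A * W) A"
    unfolding similar_mat_def similar_mat_wit_def using A W WtW
    by (intro exI[of _ "transpose_mat W"] exI[of _ W]) auto
qed

lemma orthogonal_diagonalization_extend: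
  fixes A W B Q :: "real mat"
  assumes A: "A \<in> carrier_mat (Suc m) (Suc m)"
    and W: "W \<in> carrier_mat (Suc m) (Suc m)" and WtW: "transpose_mat W * W = 1\<^sub>m (Suc m)"
    and B: "B \<in> carrier_mat m m"
    and blk: "transpose_mat W * A * W = four_block_mat (mat 1 1 (\<lambda>_. e)) (0\<^sub>m 1 m) (0\<^sub>m m 1) B"
    and Q: "Q \<in> carrier_mat m m" and QtQ: "transpose_mat Q * Q = 1\<^sub>m m"
    and BQ: "B * Q = Q * mat_diag m (\<lambda>i. es ! i)"
  shows "\<exists>P \<in> carrier_mat (Suc m) (Suc m). transpose_mat P * P = 1\<^sub>m (Suc m)
    \<and> A * P = P * mat_diag (Suc m) (\<lambda>i. (e # es) ! i)"
proof -
  let ?n = "Suc m" and ?T = "transpose_mat W * A * W"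
  define Q' where "Q' = four_block_mat (1\<^sub>m 1) (0\<^sub>m 1 m) (0\<^sub>m m 1) Q"
  define P where "P = W * Q'"
  have Q': "Q' \<in> carrier_mat ?n ?n" unfolding Q'_def using Q by auto
  have "transpose_mat Q' * Q' = four_block_mat (1\<^sub>m 1) (0\<^sub>m 1 m) (0\<^sub>m m 1) (transpose_mat Q * Q)"
    unfolding Q'_def transpose_four_block_mat[OF one_carrier_mat zero_carrier_mat zero_carrier_mat Q]
    using Q by (simp add: mult_block_diag_mat)
  also have "\<dots> = 1\<^sub>m ?n" unfolding QtQ using four_block_one_mat[of 1 m] by simp
  finally have Q'tQ': "transpose_mat Q' * Q' = 1\<^sub>m ?n" .
  have "transpose_mat P * P = transpose_mat Q' * (transpose_mat W * W) * Q'"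
    unfolding P_def using W Q'
    by (simp add: transpose_mult[of W ?n ?n Q' ?n] assoc_mult_mat[of _ ?n ?n _ ?n _ ?n])
  hence "transpose_mat P * P = 1\<^sub>m ?n" unfolding WtW using Q' Q'tQ' by simp
  moreover have "A * P = P * mat_diag ?n (\<lambda>i. (e # es) ! i)"
  proof -
    have T: "?T \<in> carrier_mat ?n ?n" using A W by auto
    have WWt: "W * transpose_mat W = 1\<^sub>m ?n" using mat_mult_left_right_inverse[OF _ W WtW] W by auto
    have D: "mat_diag ?n (\<lambda>i. (e # es) ! i)
        = four_block_mat (mat 1 1 (\<lambda>_. e)) (0\<^sub>m 1 m) (0\<^sub>m m 1) (mat_diag m (\<lambda>i. es ! i))"
      by (rule eq_matI) (auto simp: mat_diag_def)
    have "W * ?T = (W * transpose_mat W) * A * W"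
      using A W by (simp add: assoc_mult_mat[of _ ?n ?n _ ?n _ ?n])
    also have "\<dots> = A * W" unfolding WWt using A by simp
    finally have AW: "A * W = W * ?T" ..
    have "A * P = (A * W) * Q'" unfolding P_def by (rule assoc_mult_mat[symmetric, OF A W Q'])
    also have "\<dots> = W * (?T * Q')" unfolding AW by (rule assoc_mult_mat[OF W T Q'])
    also have "?T * Q' = Q' * mat_diag ?n (\<lambda>i. (e # es) ! i)"
      unfolding blk D Q'_def using B Q BQ by (simp add: mult_block_diag_mat)
    also have "W * \<dots> = P * mat_diag ?n (\<lambda>i. (e # es) ! i)"
      unfolding P_def by (rule assoc_mult_mat[symmetric, OF W Q' mat_diag_dim])
    finally show ?thesis .
  qed
  moreover have "P \<in> carrier_mat ?n ?n" unfolding P_def using W Q' by simp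
  ultimately show ?thesis by blast
qed

lemma real_symmetric_orthogonal_diagonalization:
  fixes A :: "real mat"
  assumes "A \<in> carrier_mat n n" and "transpose_mat A = A"
    and "char_poly A = (\<Prod>e\<leftarrow>es. [:-e, 1:])"
  shows "\<exists>P \<in> carrier_mat n n. transpose_mat P * P = 1\<^sub>m n
    \<and> A * P = P * mat_diag n (\<lambda>i. es ! i)"
  using assms
proof (induction es arbitrary: n A)
  case Nil
  with degree_monic_char_poly[of A n] have "n = 0" by auto
  then show ?case using Nil.prems by (intro bexI[of _ "1\<^sub>m 0"]) (auto simp: mat_diag_def intro!: eq_matI)
next
  case (Cons e es n A)
  have A: "A \<in> carrier_mat n n" and sym: "transpose_mat A = A"
    and cp: "char_poly A = [:-e, 1:] * (\<Prod>e\<leftarrow>es. [:-e, 1:])" using Cons.prems by auto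
  have "degree (char_poly A) = Suc (length es)"
    unfolding Cons.prems(3) degree_linear_factors by simp
  then obtain m where n: "n = Suc m" using degree_monic_char_poly[OF A] by (cases n) auto
  have "eigenvalue A e" unfolding eigenvalue_root_char_poly[OF A] cp by simp
  then obtain W B where W: "W \<in> carrier_mat n n" and WtW: "transpose_mat W * W = 1\<^sub>m n"
    and B: "B \<in> carrier_mat m m" and symB: "transpose_mat B = B"
    and blk: "transpose_mat W * A * W = four_block_mat (mat 1 1 (\<lambda>_. e)) (0\<^sub>m 1 m) (0\<^sub>m m 1) B"
    using orthogonal_deflation[of A m e] A sym unfolding n by blast
  have "[:-e, 1:] * (\<Prod>e\<leftarrow>es. [:-e, 1:]) = char_poly (transpose_mat W * A * W)"
    unfolding char_poly_orthogonal_conj[OF A W WtW] cp ..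
  also have "\<dots> = char_poly (mat 1 1 (\<lambda>_. e)) * char_poly B"
    unfolding blk by (rule char_poly_four_block_zeros_col) (use B in auto)
  also have "char_poly (mat 1 1 (\<lambda>_. e)) = [:-e, 1:]"
    by (simp add: char_poly_defs det_def sign_def)
  finally have "char_poly B = (\<Prod>e\<leftarrow>es. [:-e, 1:])"
    by (metis mult_cancel_left pCons_eq_0_iff zero_neq_one)
  from Cons.IH[OF B symB this] obtain Q where "Q \<in> carrier_mat m m"
    and "transpose_mat Q * Q = 1\<^sub>m m" and "B * Q = Q * mat_diag m (\<lambda>i. es ! i)"
    by blast
  from orthogonal_diagonalization_extend[OF A[unfolded n] W[unfolded n] WtW[unfolded n] B blk this]
  show ?case unfolding n .
qed

lemma real_symmetric_eigenvalue_real: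
  fixes A :: "real mat" and a :: complex
  assumes A: "A \<in> carrier_mat n n" and sym: "transpose_mat A = A"
    and ev: "eigenvalue (map_mat complex_of_real A) a"
  shows "a \<in> \<real>"
proof -
  let ?Ac = "map_mat complex_of_real A"
  obtain v where "eigenvector ?Ac v a" using ev unfolding eigenvalue_def by blast
  hence v: "v \<in> carrier_vec n" and v0: "v \<noteq> 0\<^sub>v n" and Av: "?Ac *\<^sub>v v = a \<cdot>\<^sub>v v"
    using A unfolding eigenvector_def by auto
  have symij: "A $$ (i, j) = A $$ (j, i)" if "i < n" "j < n" for i j
    using arg_cong[OF sym, of "\<lambda>M. M $$ (j, i)"] that A by auto
  \<comment> \<open>\<open>s = v\<^sup>* A v\<close> is real since \<open>A\<close> is real symmetric, and \<open>s = a t\<close> with \<open>t = v\<^sup>* v > 0\<close>.\<close>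
  define s where "s = (\<Sum>i<n. cnj (v $ i) * (\<Sum>j<n. of_real (A $$ (i, j)) * v $ j))"
  define t where "t = (\<Sum>i<n. cnj (v $ i) * v $ i)"
  have "s = (\<Sum>i<n. cnj (v $ i) * (?Ac *\<^sub>v v) $ i)"
    unfolding s_def using A v
    by (intro sum.cong refl) (auto simp: scalar_prod_def atLeast0LessThan mult.commute)
  also have "\<dots> = a * t"
    unfolding Av t_def using v by (auto simp: sum_distrib_left intro!: sum.cong)
  finally have s_eq: "s = a * t" .
  have "cnj s = (\<Sum>i<n. \<Sum>j<n. v $ i * of_real (A $$ (i, j)) * cnj (v $ j))"
    unfolding s_def by (simp add: sum_distrib_left mult.assoc)
  also have "\<dots> = s"
    unfolding s_def by (subst sum.swap) (auto simp: sum_distrib_left symij mult_ac intro!: sum.cong)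
  finally have "cnj s = s" .
  have "t = of_real (\<Sum>i<n. (cmod (v $ i))\<^sup>2)"
    unfolding t_def of_real_sum
    by (intro sum.cong refl) (metis complex_norm_square mult.commute of_real_power)
  moreover obtain i where "i < n" "v $ i \<noteq> 0" using v v0 by (metis eq_vecI carrier_vecD index_zero_vec)
  ultimately have "Re t > 0" "Im t = 0" by (auto intro!: sum_pos2[of _ i])
  moreover have "Im (a * t) = 0" using \<open>cnj s = s\<close> s_eq by (metis Reals_cnj_iff complex_is_Real_iff)
  ultimately show ?thesis by (simp add: complex_is_Real_iff)
qed

lemma real_symmetric_char_poly_splits:
  fixes A :: "real mat"
  assumes A: "A \<in> carrier_mat n n" and sym: "transpose_mat A = A"
  shows "\<exists>rs. char_poly A = (\<Prod>r\<leftarrow>rs. [:-r, 1:])"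
proof -
  interpret of_real_poly: map_poly_inj_idom_hom complex_of_real ..
  let ?Ac = "map_mat complex_of_real A"
  have Ac: "?Ac \<in> carrier_mat n n" using A by auto
  obtain as where cpc: "char_poly ?Ac = (\<Prod>a\<leftarrow>as. [:-a, 1:])"
    using char_poly_factorized[OF Ac] by blast
  have "a \<in> \<real>" if "a \<in> set as" for a
  proof (rule real_symmetric_eigenvalue_real[OF A sym])
    show "eigenvalue ?Ac a"
      unfolding eigenvalue_root_char_poly[OF Ac] cpc using that by (rule linear_poly_root)
  qed
  define rs where "rs = map Re as"
  have "as = map complex_of_real rs"
    unfolding rs_def using \<open>\<And>a. a \<in> set as \<Longrightarrow> a \<in> \<real>\<close>
    by (induction as) (auto simp: complex_is_Real_iff)
  hence "map_poly complex_of_real (char_poly A) = map_poly complex_of_real (\<Prod>r\<leftarrow>rs. [:-r, 1:])"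
    unfolding of_real_hom.char_poly_hom[OF A, symmetric] cpc
    by (simp add: of_real_poly.hom_prod_list o_def)
  thus ?thesis by auto
qed

section \<open>Eigenbases of symmetric kernels on a finite set\<close>

lemma charpoly_on_eq_char_poly:
  assumes g: "bij_betw g {0..<N} V"
  shows "charpoly_on V M = char_poly (mat N N (\<lambda>(i, j). M (g i) (g j)))"
proof -
  let ?A = "mat N N (\<lambda>(i, j). M (g i) (g j))"
  let ?h = "inv_into {0..<N} g"
  have inj: "inj_on g {0..<N}" using g by (auto simp: bij_betw_def)
  have h: "bij_betw ?h V {0..<N}" by (rule bij_betw_inv_into[OF g])
  have entry: "char_poly_matrix ?A $$ (i, p i) = [: - M (g i) (g (p i)), (if p i = i then 1 else 0) :]"
    if "p permutes {0..<N}" "i \<in> {0..<N}" for p i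
    using that permutes_in_image[OF that(1)] unfolding char_poly_matrix_def by (auto simp: one_pCons)
  have "char_poly ?A = (\<Sum>p | p permutes {0..<N}. of_int (sign p) *
      (\<Prod>i = 0..<N. char_poly_matrix ?A $$ (i, p i)))"
    unfolding char_poly_def by (rule det_def') simp
  also have "\<dots> = (\<Sum>p | p permutes {0..<N}. of_int (sign p) *
      (\<Prod>i = 0..<N. [: - M (g i) (g (p i)), (if p i = i then 1 else 0) :]))"
    by (intro sum.cong refl) (auto simp: entry intro!: prod.cong)
  also have "\<dots> = charpoly_on V M"
    unfolding charpoly_on_def
  proof (rule sum.reindex_bij_witness[of _ "map_permutation V ?h" "map_permutation {0..<N} g"])
    fix q assume "q \<in> {q. q permutes V}"
    then show "map_permutation {0..<N} g (map_permutation V ?h q) = q"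
      and "map_permutation V ?h q \<in> {p. p permutes {0..<N}}"
      using map_permutation_compose_inv[OF h] map_permutation_permutes[OF h] g
      by (auto simp: bij_betw_inv_into_right)
  next
    fix p assume p: "p \<in> {p. p permutes {0..<N}}"
    then show "map_permutation V ?h (map_permutation {0..<N} g p) = p"
      and "map_permutation {0..<N} g p \<in> {q. q permutes V}"
      using map_permutation_compose_inv[OF g] map_permutation_permutes[OF g] inj
      by (auto simp: inv_into_f_f)
    let ?q = "map_permutation {0..<N} g p"
    let ?F = "\<lambda>q v. [:- M v (q v), if q v = v then 1 else 0:]"
    have qg: "?q (g i) = g (p i)" and pi: "p i \<in> {0..<N}" if "i \<in> {0..<N}" for i
      using map_permutation_apply[OF inj that] permutes_in_image p that by auto
    have "(\<Prod>v\<in>V. ?F ?q v) = (\<Prod>i = 0..<N. ?F ?q (g i))"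
      using prod.reindex[OF inj, of "?F ?q"] bij_betw_imp_surj_on[OF g] by simp
    also have "\<dots> = (\<Prod>i = 0..<N. [: - M (g i) (g (p i)), (if p i = i then 1 else 0) :])"
      using qg pi by (intro prod.cong refl) (auto simp: inj_on_eq_iff[OF inj])
    finally have "(\<Prod>v\<in>V. ?F ?q v) = (\<Prod>i = 0..<N. [: - M (g i) (g (p i)), (if p i = i then 1 else 0) :])" .
    moreover have "sign ?q = sign p" using p by (intro sign_map_permutation[OF inj]) auto
    ultimately show "of_int (sign ?q) * (\<Prod>v\<in>V. [:- M v (?q v), if ?q v = v then 1 else 0:])
       = of_int (sign p) * (\<Prod>i = 0..<N. [: - M (g i) (g (p i)), (if p i = i then 1 else 0) :])"
      by simp
  qed
  finally show ?thesis by simp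
qed

lemma proots_linear_factors: "proots (\<Prod>r\<leftarrow>rs. [:-r, 1:]) = mset (rs :: real list)"
proof (induction rs)
  case (Cons r rs)
  have nz: "(\<Prod>r\<leftarrow>rs. [:-r, 1:]) \<noteq> (0 :: real poly)" by (auto simp: prod_list_zero_iff)
  have "proots (\<Prod>r\<leftarrow>r # rs. [:-r, 1:]) = proots [:-r, 1:] + proots (\<Prod>r\<leftarrow>rs. [:-r, 1:])"
    by (simp only: list.map prod_list.Cons, rule proots_mult) (use nz in auto)
  then show ?case using Cons by simp
qed simp

lemma prod_linear_factors_sort: "(\<Prod>r\<leftarrow>sort rs. [:-r, 1:]) = (\<Prod>r\<leftarrow>(rs :: real list). [:-r, 1:])"
  by (simp only: prod_mset_prod_list[symmetric] mset_map mset_sort)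

definition orthonormal_eigenbasis ::
    "'a set \<Rightarrow> ('a \<Rightarrow> 'a \<Rightarrow> real) \<Rightarrow> real list \<Rightarrow> (nat \<Rightarrow> 'a \<Rightarrow> real) \<Rightarrow> bool" where
  "orthonormal_eigenbasis V L es u \<longleftrightarrow> length es = card V
    \<and> (\<forall>i<card V. \<forall>l<card V. (\<Sum>x\<in>V. u i x * u l x) = (if i = l then 1 else 0))
    \<and> (\<forall>x\<in>V. \<forall>y\<in>V. (\<Sum>i<card V. u i x * u i y) = (if x = y then 1 else 0))
    \<and> (\<forall>i<card V. \<forall>x\<in>V. (\<Sum>y\<in>V. L x y * u i y) = es ! i * u i x)"

lemma symmetric_orthonormal_eigenbasis:
  fixes L :: "'a \<Rightarrow> 'a \<Rightarrow> real"
  assumes fin: "finite V" and sym: "\<And>x y. x \<in> V \<Longrightarrow> y \<in> V \<Longrightarrow> L x y = L y x"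
  shows "\<exists>u. orthonormal_eigenbasis V L (eigenvalues_sorted V L) u"
proof -
  define N where "N = card V"
  define es where "es = eigenvalues_sorted V L"
  obtain g where g: "bij_betw g {0..<N} V" using ex_bij_betw_nat_finite[OF fin] unfolding N_def by blast
  define h where "h = inv_into {0..<N} g"
  have h: "bij_betw h V {0..<N}" unfolding h_def by (rule bij_betw_inv_into[OF g])
  have gh: "g (h x) = x" if "x \<in> V" for x
    using g that unfolding h_def by (meson bij_betw_inv_into_right)
  have hg: "h (g i) = i" if "i < N" for i
    using g that unfolding h_def by (simp add: bij_betw_def inv_into_f_f)
  have hV: "h x < N" if "x \<in> V" for x using h that by (auto simp: bij_betw_def)
  have reindex: "(\<Sum>x\<in>V. F x) = (\<Sum>k<N. F (g k))" for F :: "'a \<Rightarrow> real"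
    using sum.reindex[of g "{0..<N}" F] g by (simp add: bij_betw_def atLeast0LessThan)
  define A where "A = mat N N (\<lambda>(i, j). L (g i) (g j))"
  have A: "A \<in> carrier_mat N N" unfolding A_def by auto
  have "transpose_mat A = A"
    unfolding A_def using g sym by (intro eq_matI) (auto simp: bij_betw_def)
  then obtain rs where rs: "char_poly A = (\<Prod>r\<leftarrow>rs. [:-r, 1:])"
    using real_symmetric_char_poly_splits[OF A] by blast
  have es: "es = sort rs"
    unfolding es_def eigenvalues_sorted_def charpoly_on_eq_char_poly[OF g] A_def[symmetric] rs
      proots_linear_factors by simp
  have cp: "char_poly A = (\<Prod>r\<leftarrow>es. [:-r, 1:])" unfolding es rs prod_linear_factors_sort ..
  hence len: "length es = N" using degree_monic_char_poly[OF A] degree_linear_factors by metis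
  obtain P where P: "P \<in> carrier_mat N N" and PtP: "transpose_mat P * P = 1\<^sub>m N"
    and AP: "A * P = P * mat_diag N (\<lambda>i. es ! i)"
    using real_symmetric_orthogonal_diagonalization[OF A \<open>transpose_mat A = A\<close> cp] by blast
  have PPt: "P * transpose_mat P = 1\<^sub>m N"
    using mat_mult_left_right_inverse[OF _ P PtP] P by auto
  \<comment> \<open>The eigenfunctions are the columns of \<open>P\<close>, read through the enumeration \<open>g\<close> of \<open>V\<close>.\<close>
  define u where "u i x = P $$ (h x, i)" for i x
  have "(\<Sum>x\<in>V. u i x * u l x) = (transpose_mat P * P) $$ (i, l)" if "i < N" "l < N" for i l
    unfolding reindex u_def using P that by (simp add: hg scalar_prod_def atLeast0LessThan)
  moreover have "(\<Sum>i<N. u i x * u i y) = (P * transpose_mat P) $$ (h x, h y)"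
    if "x \<in> V" "y \<in> V" for x y
    unfolding u_def using P that hV by (simp add: scalar_prod_def atLeast0LessThan)
  moreover have "h x = h y \<longleftrightarrow> x = y" if "x \<in> V" "y \<in> V" for x y
    using that gh by metis
  moreover have "(\<Sum>y\<in>V. L x y * u i y) = (A * P) $$ (h x, i)" if "i < N" "x \<in> V" for i x
    unfolding reindex u_def A_def using that P hV by (simp add: gh hg scalar_prod_def atLeast0LessThan)
  ultimately show ?thesis
    unfolding orthonormal_eigenbasis_def es_def[symmetric] N_def[symmetric] PtP PPt AP
    using P hV len by (intro exI[of _ u]) (auto simp: mat_diag_mult_right u_def)
qed

lemma orthonormal_eigenbasis_parseval:
  assumes "orthonormal_eigenbasis V L es u" and "finite V"
  shows "(\<Sum>x\<in>V. F x * G x) = (\<Sum>i<card V. (\<Sum>x\<in>V. F x * u i x) * (\<Sum>x\<in>V. G x * u i x))"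
proof -
  have "(\<Sum>i<card V. (\<Sum>x\<in>V. F x * u i x) * (\<Sum>y\<in>V. G y * u i y))
      = (\<Sum>i<card V. \<Sum>x\<in>V. \<Sum>y\<in>V. F x * G y * (u i x * u i y))"
    by (simp add: sum_product mult_ac)
  also have "\<dots> = (\<Sum>x\<in>V. \<Sum>y\<in>V. F x * G y * (\<Sum>i<card V. u i x * u i y))"
    by (subst sum.swap) (simp add: sum.swap[of _ "{..<card V}"] sum_distrib_left)
  also have "\<dots> = (\<Sum>x\<in>V. \<Sum>y\<in>V. F x * G y * (if x = y then 1 else 0))"
    using assms(1) unfolding orthonormal_eigenbasis_def by (intro sum.cong refl) auto
  also have "\<dots> = (\<Sum>x\<in>V. F x * G x)"
    using assms(2) by (simp add: if_distrib cong: if_cong)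
  finally show ?thesis ..
qed

lemma orthonormal_eigenbasis_coeff:
  assumes "orthonormal_eigenbasis V L es u" and "i < card V"
    and sym: "\<And>x y. x \<in> V \<Longrightarrow> y \<in> V \<Longrightarrow> L x y = L y x"
  shows "(\<Sum>x\<in>V. (\<Sum>y\<in>V. L x y * F y) * u i x) = es ! i * (\<Sum>x\<in>V. F x * u i x)"
proof -
  have "(\<Sum>x\<in>V. (\<Sum>y\<in>V. L x y * F y) * u i x) = (\<Sum>x\<in>V. \<Sum>y\<in>V. L x y * F y * u i x)"
    by (simp add: sum_distrib_right)
  also have "\<dots> = (\<Sum>y\<in>V. \<Sum>x\<in>V. L x y * F y * u i x)" by (rule sum.swap)
  also have "\<dots> = (\<Sum>y\<in>V. F y * (\<Sum>x\<in>V. L y x * u i x))"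
    by (intro sum.cong refl) (auto simp: sum_distrib_left sym mult_ac)
  also have "\<dots> = (\<Sum>y\<in>V. F y * (es ! i * u i y))"
    using assms(1,2) unfolding orthonormal_eigenbasis_def by (intro sum.cong refl) auto
  finally show ?thesis by (simp add: sum_distrib_left mult_ac)
qed

lemma quadratic_form_ge_second_eigenvalue:
  fixes L :: "'a \<Rightarrow> 'a \<Rightarrow> real" and f :: "'a \<Rightarrow> real"
  assumes fin: "finite V" and basis: "orthonormal_eigenbasis V L es u" and "sorted es"
    and sym: "\<And>x y. x \<in> V \<Longrightarrow> y \<in> V \<Longrightarrow> L x y = L y x"
    and rows: "\<And>x. x \<in> V \<Longrightarrow> (\<Sum>y\<in>V. L x y) = 0"
    and pos: "es ! 1 > 0" and f0: "(\<Sum>x\<in>V. f x) = 0"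
  shows "(\<Sum>x\<in>V. f x * (\<Sum>y\<in>V. L x y * f y)) \<ge> es ! 1 * (\<Sum>x\<in>V. (f x)\<^sup>2)"
proof (cases "V = {}")
  case False
  define N where "N = card V"
  have N0: "N > 0" using False fin unfolding N_def by auto
  define c where "c F i = (\<Sum>x\<in>V. F x * u i x)" for F :: "'a \<Rightarrow> real" and i
  note parseval = orthonormal_eigenbasis_parseval[OF basis fin, folded N_def c_def]
  note coeff = orthonormal_eigenbasis_coeff[OF basis _ sym, folded N_def c_def]
  have es1: "es ! 1 \<le> es ! i" if "1 \<le> i" "i < N" for i
    using sorted_nth_mono[OF \<open>sorted es\<close> that(1)] that basis
    unfolding N_def orthonormal_eigenbasis_def by auto
  have split: "(\<Sum>i<N. F i) = F 0 + (\<Sum>i\<in>{1..<N}. F i)" for F :: "nat \<Rightarrow> real"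
    using N0 by (simp add: sum.atLeast1_atMost_eq lessThan_atLeast0 sum.atLeast_Suc_lessThan)
  \<comment> \<open>The constants lie in the kernel of \<open>L\<close>, hence are orthogonal to every \<open>u i\<close> with
    \<open>i \<ge> 1\<close>, whose eigenvalue is positive; so \<open>f\<close>, being orthogonal to the constants, has no
    component along \<open>u 0\<close>.\<close>
  have one_coeff: "c (\<lambda>_. 1) i = 0" if "1 \<le> i" "i < N" for i
    using coeff[OF that(2), of "\<lambda>_. 1"] rows es1[OF that] pos unfolding c_def by simp
  have "real N = c (\<lambda>_. 1) 0 * c (\<lambda>_. 1) 0"
    using parseval[of "\<lambda>_. 1" "\<lambda>_. 1"] one_coeff unfolding split by (simp add: N_def)
  moreover have "0 = c f 0 * c (\<lambda>_. 1) 0"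
    using parseval[of f "\<lambda>_. 1"] one_coeff f0 unfolding split by simp
  ultimately have f_coeff0: "c f 0 = 0" using N0 by auto
  have "(\<Sum>x\<in>V. f x * (\<Sum>y\<in>V. L x y * f y))
      = (\<Sum>i<N. c f i * c (\<lambda>x. \<Sum>y\<in>V. L x y * f y) i)"
    by (rule parseval)
  also have "\<dots> = (\<Sum>i<N. es ! i * (c f i)\<^sup>2)"
    by (intro sum.cong refl) (simp add: coeff power2_eq_square)
  also have "\<dots> \<ge> (\<Sum>i<N. es ! 1 * (c f i)\<^sup>2)"
  proof (rule sum_mono)
    fix i assume "i \<in> {..<N}"
    then show "es ! 1 * (c f i)\<^sup>2 \<le> es ! i * (c f i)\<^sup>2"
      using es1[of i] f_coeff0 by (cases "i = 0") (auto intro: mult_right_mono)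
  qed
  also have "(\<Sum>i<N. es ! 1 * (c f i)\<^sup>2) = es ! 1 * (\<Sum>x\<in>V. (f x)\<^sup>2)"
    using parseval[of f f] by (simp add: sum_distrib_left power2_eq_square)
  finally show ?thesis .
qed simp

lemma second_eigenvalue_ge:
  fixes L :: "'a \<Rightarrow> 'a \<Rightarrow> real"
  assumes fin: "finite V" and V2: "card V \<ge> 2"
    and sym: "\<And>x y. x \<in> V \<Longrightarrow> y \<in> V \<Longrightarrow> L x y = L y x"
    and low_constant: "\<And>e w x y. e < c \<Longrightarrow> (\<And>x. x \<in> V \<Longrightarrow> (\<Sum>y\<in>V. L x y * w y) = e * w x)
      \<Longrightarrow> x \<in> V \<Longrightarrow> y \<in> V \<Longrightarrow> w x = w y"
  shows "eigenvalues_sorted V L ! 1 \<ge> c"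
proof (rule ccontr)
  define es where "es = eigenvalues_sorted V L"
  obtain u where "orthonormal_eigenbasis V L es u"
    using symmetric_orthonormal_eigenbasis[of V L, OF fin sym] unfolding es_def by blast
  hence len: "length es = card V"
    and orth: "\<And>i l. i < card V \<Longrightarrow> l < card V \<Longrightarrow> (\<Sum>x\<in>V. u i x * u l x) = (if i = l then 1 else 0)"
    and eig: "\<And>i x. i < card V \<Longrightarrow> x \<in> V \<Longrightarrow> (\<Sum>y\<in>V. L x y * u i y) = es ! i * u i x"
    unfolding orthonormal_eigenbasis_def by auto
  assume "\<not> ?thesis"
  moreover have "es ! 0 \<le> es ! 1"
    using len V2 unfolding es_def eigenvalues_sorted_def by (intro sorted_nth_mono) auto
  ultimately have low: "es ! i < c" if "i < 2" for i
    using that unfolding es_def by (cases i) auto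
  obtain x0 where x0: "x0 \<in> V" using V2 by fastforce
  \<comment> \<open>Both \<open>u 0\<close> and \<open>u 1\<close> would be constant, which orthonormality forbids.\<close>
  have "(\<Sum>x\<in>V. u i x * u l x) = real (card V) * (u i x0 * u l x0)" if "i < 2" "l < 2" for i l
  proof -
    have "u i x = u i x0" if "i < 2" "x \<in> V" for i x
      using low_constant[OF low[OF \<open>i < 2\<close>] eig \<open>x \<in> V\<close> x0] \<open>i < 2\<close> V2 by simp
    thus ?thesis using \<open>i < 2\<close> \<open>l < 2\<close> by simp
  qed
  with orth[of 0 1] orth[of 0 0] orth[of 1 1] V2 show False by auto
qed

section \<open>Regular graphs and their normalised Laplacian\<close>

lemma card_pairs_eq_sum:
  assumes "finite V"
  shows "real (card {(x, y) \<in> V \<times> V. P x y}) = (\<Sum>x\<in>V. \<Sum>y\<in>V. if P x y then 1 else 0)"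
proof -
  have "{(x, y) \<in> V \<times> V. P x y} = {p \<in> V \<times> V. P (fst p) (snd p)}" by auto
  hence "real (card {(x, y) \<in> V \<times> V. P x y}) = (\<Sum>p\<in>V \<times> V. if P (fst p) (snd p) then 1 else 0)"
    using assms by (simp add: sum.If_cases Int_def)
  also have "\<dots> = (\<Sum>x\<in>V. \<Sum>y\<in>V. if P x y then 1 else 0)"
    by (simp add: sum.cartesian_product case_prod_beta)
  finally show ?thesis .
qed

lemma centred_indicator_sums:
  fixes S V :: "'a set"
  assumes "finite V" and "S \<subseteq> V"
  defines "\<mu> \<equiv> real (card S) / real (card V)"
  defines "f \<equiv> \<lambda>x. (if x \<in> S then 1 else 0) - \<mu>"
  shows "(\<Sum>x\<in>V. f x) = 0" and "(\<Sum>x\<in>V. (f x)\<^sup>2) = \<mu> * (1 - \<mu>) * real (card V)"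
proof -
  have ind: "(\<Sum>x\<in>V. (if x \<in> S then 1 else 0 :: real)) = real (card S)"
    using assms(1,2) by (simp add: sum.If_cases Int_absorb1)
  have card_S: "real (card S) = \<mu> * real (card V)"
    using assms(1,2) card_mono[OF assms(1,2)] unfolding \<mu>_def by (cases "card V = 0") auto
  show "(\<Sum>x\<in>V. f x) = 0" unfolding f_def using ind card_S by (simp add: sum_subtractf)
  have "(\<Sum>x\<in>V. (f x)\<^sup>2) = (\<Sum>x\<in>V. (if x \<in> S then 1 else 0) * (1 - 2 * \<mu>) + \<mu>\<^sup>2)"
    unfolding f_def by (intro sum.cong refl) (auto simp: power2_eq_square algebra_simps)
  also have "\<dots> = real (card S) * (1 - 2 * \<mu>) + real (card V) * \<mu>\<^sup>2"
    using ind by (simp add: sum.distrib flip: sum_distrib_right)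
  also have "\<dots> = \<mu> * (1 - \<mu>) * real (card V)"
    unfolding card_S by (simp add: power2_eq_square algebra_simps)
  finally show "(\<Sum>x\<in>V. (f x)\<^sup>2) = \<mu> * (1 - \<mu>) * real (card V)" .
qed

definition norm_laplacian :: "('a \<Rightarrow> 'a \<Rightarrow> bool) \<Rightarrow> nat \<Rightarrow> 'a \<Rightarrow> 'a \<Rightarrow> real" where
  "norm_laplacian adj deg x y = (if x = y then 1 else 0) - (if adj x y then 1 else 0) / real deg"

locale regular_graph =
  fixes V :: "'a set" and adj :: "'a \<Rightarrow> 'a \<Rightarrow> bool" and deg :: nat
  assumes finite_vertices: "finite V"
    and adj_commute: "adj x y \<longleftrightarrow> adj y x"
    and degree: "x \<in> V \<Longrightarrow> card {y \<in> V. adj x y} = deg"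
    and deg_pos: "deg > 0"
begin

abbreviation laplacian :: "'a \<Rightarrow> 'a \<Rightarrow> real" where
  "laplacian \<equiv> norm_laplacian adj deg"

lemma laplacian_commute: "laplacian x y = laplacian y x"
  unfolding norm_laplacian_def using adj_commute by auto

lemma laplacian_apply:
  assumes "x \<in> V"
  shows "(\<Sum>y\<in>V. laplacian x y * f y) = f x - (\<Sum>y\<in>{y \<in> V. adj x y}. f y) / real deg"
proof -
  have "(\<Sum>y\<in>V. laplacian x y * f y)
      = (\<Sum>y\<in>V. (if x = y then f y else 0) - (if adj x y then f y else 0) / real deg)"
    by (intro sum.cong refl) (auto simp: norm_laplacian_def left_diff_distrib)
  also have "\<dots> = f x - (\<Sum>y\<in>{y \<in> V. adj x y}. f y) / real deg"
    using assms finite_vertices by (simp add: sum_subtractf sum_divide_distrib sum.inter_filter)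
  finally show ?thesis .
qed

lemma laplacian_row_sum: "x \<in> V \<Longrightarrow> (\<Sum>y\<in>V. laplacian x y) = 0"
  using laplacian_apply[of x "\<lambda>_. 1"] degree[of x] deg_pos by simp

lemma card_adjacent_pairs: "card {(x, y) \<in> V \<times> V. adj x y} = card V * deg"
proof -
  have "real (card {(x, y) \<in> V \<times> V. adj x y}) = (\<Sum>x\<in>V. real deg)"
    unfolding card_pairs_eq_sum[OF finite_vertices] using degree finite_vertices
    by (intro sum.cong refl) (simp add: sum.If_cases Int_def conj_commute)
  thus ?thesis by (simp flip: of_nat_mult)
qed

lemma laplacian_quadratic_form_indicator:
  fixes \<mu> :: real
  assumes "S \<subseteq> V"
  defines "f \<equiv> \<lambda>x. (if x \<in> S then 1 else 0) - \<mu>"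
  shows "(\<Sum>x\<in>V. f x * (\<Sum>y\<in>V. laplacian x y * f y))
    = real (card {(x, y) \<in> V \<times> V. adj x y \<and> x \<in> S \<and> y \<notin> S}) / real deg"
proof -
  define a where "a x y = (if adj x y then 1 else 0 :: real)" for x y
  define g where "g x = (if x \<in> S then 1 else 0 :: real)" for x
  have sq: "f x * f x = (\<Sum>y\<in>V. a x y * f x * f x) / real deg" if "x \<in> V" for x
    using degree[OF that] deg_pos finite_vertices
    by (simp add: a_def sum.If_cases Int_def conj_commute flip: sum_distrib_right)
  have "(\<Sum>x\<in>V. f x * (\<Sum>y\<in>V. laplacian x y * f y))
      = (\<Sum>x\<in>V. ((\<Sum>y\<in>V. a x y * f x * f x) - (\<Sum>y\<in>V. a x y * f x * f y)) / real deg)"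
  proof (intro sum.cong refl)
    fix x assume x: "x \<in> V"
    have "f x * (\<Sum>y\<in>V. laplacian x y * f y) = f x * f x - f x * (\<Sum>y\<in>V. a x y * f y) / real deg"
      unfolding laplacian_apply[OF x] a_def using finite_vertices
      by (simp add: right_diff_distrib sum.inter_filter if_distrib[of "\<lambda>c. c * _"] cong: if_cong)
    also have "\<dots> = ((\<Sum>y\<in>V. a x y * f x * f x) - (\<Sum>y\<in>V. a x y * f x * f y)) / real deg"
      unfolding sq[OF x] by (simp add: diff_divide_distrib sum_distrib_left mult_ac)
    finally show "f x * (\<Sum>y\<in>V. laplacian x y * f y)
        = ((\<Sum>y\<in>V. a x y * f x * f x) - (\<Sum>y\<in>V. a x y * f x * f y)) / real deg" .
  qed
  also have "\<dots> = (\<Sum>x\<in>V. \<Sum>y\<in>V. a x y * (f x * (f x - f y))) / real deg"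
    by (simp add: sum_divide_distrib[symmetric] sum_subtractf[symmetric] algebra_simps)
  \<comment> \<open>Since \<open>f = g - \<mu>\<close>, the \<open>\<mu>\<close>-part is \<open>\<mu> \<Sum> a x y (g x - g y)\<close>, which vanishes by symmetry of \<open>a\<close>.\<close>
  also have "(\<Sum>x\<in>V. \<Sum>y\<in>V. a x y * (f x * (f x - f y)))
      = (\<Sum>x\<in>V. \<Sum>y\<in>V. a x y * (g x * (1 - g y)))
        - \<mu> * ((\<Sum>x\<in>V. \<Sum>y\<in>V. a x y * g x) - (\<Sum>x\<in>V. \<Sum>y\<in>V. a x y * g y))"
  proof -
    have "a x y * (f x * (f x - f y)) = a x y * (g x * (1 - g y)) - \<mu> * (a x y * g x - a x y * g y)"
      for x y unfolding f_def g_def by (auto simp: algebra_simps)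
    then show ?thesis by (simp add: sum_subtractf sum_distrib_left right_diff_distrib)
  qed
  also have "(\<Sum>x\<in>V. \<Sum>y\<in>V. a x y * g x) = (\<Sum>x\<in>V. \<Sum>y\<in>V. a x y * g y)"
    by (subst sum.swap) (simp add: a_def adj_commute)
  also have "(\<Sum>x\<in>V. \<Sum>y\<in>V. a x y * (g x * (1 - g y)))
      = real (card {(x, y) \<in> V \<times> V. adj x y \<and> x \<in> S \<and> y \<notin> S})"
    unfolding card_pairs_eq_sum[OF finite_vertices] a_def g_def by (intro sum.cong refl) auto
  finally show ?thesis by simp
qed

theorem cut_ge_second_eigenvalue:
  assumes "S \<subseteq> V" and gap: "eigenvalues_sorted V laplacian ! 1 > 0"
  defines "\<mu> \<equiv> real (card S) / real (card V)"
  shows "real (card {(x, y) \<in> V \<times> V. adj x y \<and> x \<in> S \<and> y \<notin> S})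
    \<ge> real deg * eigenvalues_sorted V laplacian ! 1 * \<mu> * (1 - \<mu>) * real (card V)"
proof -
  define f where "f x = (if x \<in> S then 1 else 0) - \<mu>" for x
  obtain u where basis: "orthonormal_eigenbasis V laplacian (eigenvalues_sorted V laplacian) u"
    using symmetric_orthonormal_eigenbasis[OF finite_vertices] laplacian_commute by blast
  have "sorted (eigenvalues_sorted V laplacian)" by (simp add: eigenvalues_sorted_def)
  from quadratic_form_ge_second_eigenvalue[OF finite_vertices basis this _ laplacian_row_sum gap]
  have "eigenvalues_sorted V laplacian ! 1 * (\<Sum>x\<in>V. (f x)\<^sup>2)
      \<le> (\<Sum>x\<in>V. f x * (\<Sum>y\<in>V. laplacian x y * f y))"
    using centred_indicator_sums(1)[OF finite_vertices assms(1)] laplacian_commute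
    unfolding f_def \<mu>_def by blast
  hence "eigenvalues_sorted V laplacian ! 1 * (\<mu> * (1 - \<mu>) * real (card V))
      \<le> real (card {(x, y) \<in> V \<times> V. adj x y \<and> x \<in> S \<and> y \<notin> S}) / real deg"
    unfolding laplacian_quadratic_form_indicator[OF assms(1)] f_def \<mu>_def
      centred_indicator_sums(2)[OF finite_vertices assms(1)] .
  thus ?thesis using deg_pos by (simp add: pos_le_divide_eq mult_ac)
qed

end

section \<open>Combinatorics of the Johnson graph\<close>

lemma symdiff_commute: "symdiff A B = symdiff B A"
  unfolding symdiff_def by auto

lemma card_Diff_commute:
  assumes "finite X" "finite Y" "card X = card Y"
  shows "card (Y - X) = card (X - Y)"
  using assms by (simp add: card_Diff_subset_Int Int_commute)

lemma card_symdiff: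
  assumes "finite X" "finite Y" "card X = card Y"
  shows "card (symdiff X Y) = 2 * card (X - Y)"
proof -
  have "card (symdiff X Y) = card (X - Y) + card (Y - X)"
    unfolding symdiff_def using assms by (intro card_Un_disjoint) auto
  thus ?thesis using card_Diff_commute[OF assms] by simp
qed

lemma mem_johnson_vertices: "X \<in> johnson_vertices n k \<longleftrightarrow> X \<subseteq> {1..n} \<and> card X = k"
  unfolding johnson_vertices_def by simp

lemma finite_johnson_vertex: "X \<in> johnson_vertices n k \<Longrightarrow> finite X"
  unfolding mem_johnson_vertices using finite_subset by blast

lemma finite_johnson_vertices: "finite (johnson_vertices n k)"
  unfolding johnson_vertices_def by (rule finite_subset[of _ "Pow {1..n}"]) auto

lemma card_johnson_vertices: "card (johnson_vertices n k) = n choose k"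
  unfolding johnson_vertices_def using n_subsets[of "{1..n}" k] by simp

lemma card_johnson_vertices_ge_2:
  assumes "n = 2 * k" and "k \<ge> 1"
  shows "card (johnson_vertices n k) \<ge> 2"
proof -
  have "n choose k = ((n - 1) choose (k - 1)) + ((n - 1) choose k)"
    "(n - 1) choose (k - 1) > 0" "(n - 1) choose k > 0"
    using assms choose_reduce_nat[of n k] by auto
  thus ?thesis unfolding card_johnson_vertices by linarith
qed

lemma johnson_adj_commute: "johnson_adj j X Y \<longleftrightarrow> johnson_adj j Y X"
  unfolding johnson_adj_def by (simp add: symdiff_commute)

lemma johnson_adj_iff_card_Diff:
  assumes "X \<in> johnson_vertices n k" "Y \<in> johnson_vertices n k"
  shows "johnson_adj j X Y \<longleftrightarrow> card (X - Y) = j"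
  using card_symdiff[of X Y] assms finite_johnson_vertex
  by (auto simp: johnson_adj_def mem_johnson_vertices)

lemma johnson_exchange_mem:
  assumes X: "X \<in> johnson_vertices n k"
    and S: "S \<subseteq> X" and T: "T \<subseteq> {1..n} - X" and ST: "card S = card T"
  shows "X - S \<union> T \<in> johnson_vertices n k"
proof -
  have fX: "finite X" using finite_johnson_vertex[OF X] .
  have fT: "finite T" using T finite_subset by blast
  have "card (X - S \<union> T) = card (X - S) + card T"
    using T by (intro card_Un_disjoint) (use fX fT in auto)
  also have "\<dots> = card X" using S ST fX card_mono[OF fX S] by (simp add: card_Diff_subset finite_subset)
  finally show ?thesis using X S T by (auto simp: mem_johnson_vertices)
qed

lemma card_johnson_neighbours_with:
  assumes X: "X \<in> johnson_vertices n k"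
  shows "card {Y \<in> johnson_vertices n k. johnson_adj j X Y \<and> P (X - Y) \<and> Q (Y - X)}
    = card {S. S \<subseteq> X \<and> card S = j \<and> P S} * card {T. T \<subseteq> {1..n} - X \<and> card T = j \<and> Q T}"
proof -
  let ?N = "{Y \<in> johnson_vertices n k. johnson_adj j X Y \<and> P (X - Y) \<and> Q (Y - X)}"
  let ?ST = "{S. S \<subseteq> X \<and> card S = j \<and> P S} \<times> {T. T \<subseteq> {1..n} - X \<and> card T = j \<and> Q T}"
  have "bij_betw (\<lambda>Y. (X - Y, Y - X)) ?N ?ST"
  proof (rule bij_betw_byWitness[where f' = "\<lambda>(S, T). X - S \<union> T"])
    show "(\<lambda>Y. (X - Y, Y - X)) ` ?N \<subseteq> ?ST"
    proof (rule image_subsetI)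
      fix Y assume "Y \<in> ?N"
      hence Y: "Y \<in> johnson_vertices n k" "johnson_adj j X Y" "P (X - Y)" "Q (Y - X)" by auto
      have "card (Y - X) = card (X - Y)"
        using X Y(1) by (intro card_Diff_commute finite_johnson_vertex) (auto simp: mem_johnson_vertices)
      thus "(X - Y, Y - X) \<in> ?ST"
        using Y johnson_adj_iff_card_Diff[OF X Y(1)] by (auto simp: mem_johnson_vertices)
    qed
    show "(\<lambda>(S, T). X - S \<union> T) ` ?ST \<subseteq> ?N"
    proof (rule image_subsetI)
      fix ST assume "ST \<in> ?ST"
      then obtain S T where ST: "ST = (S, T)" and S: "S \<subseteq> X" "card S = j" "P S"
        and T: "T \<subseteq> {1..n} - X" "card T = j" "Q T" by auto
      have Y: "X - S \<union> T \<in> johnson_vertices n k"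
        using johnson_exchange_mem[OF X S(1) T(1)] S T by simp
      moreover have "X - (X - S \<union> T) = S" "(X - S \<union> T) - X = T" using S T by auto
      ultimately show "(\<lambda>(S, T). X - S \<union> T) ST \<in> ?N"
        using S T johnson_adj_iff_card_Diff[OF X Y] unfolding ST by simp
    qed
  qed auto
  thus ?thesis by (simp add: bij_betw_same_card card_cartesian_product)
qed

lemma johnson_degree:
  assumes "X \<in> johnson_vertices n k"
  shows "card {Y \<in> johnson_vertices n k. johnson_adj j X Y} = (k choose j) * ((n - k) choose j)"
proof -
  have "finite X" "X \<subseteq> {1..n}" "card X = k"
    using assms finite_johnson_vertex by (auto simp: mem_johnson_vertices)
  moreover have "card ({1..n} - X) = n - k" using calculation by (simp add: card_Diff_subset)
  ultimately show ?thesis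
    using card_johnson_neighbours_with[OF assms, of j "\<lambda>_. True" "\<lambda>_. True"]
    by (simp add: n_subsets)
qed

lemma card_subsets_containing:
  assumes "finite A" "a \<in> A" "j \<ge> 1"
  shows "card {S. S \<subseteq> A \<and> card S = j \<and> a \<in> S} = (card A - 1) choose (j - 1)"
    and "card {S. S \<subseteq> A \<and> card S = j \<and> a \<notin> S} = (card A - 1) choose j"
proof -
  have "{S. S \<subseteq> A \<and> card S = j \<and> a \<notin> S} = {S. S \<subseteq> A - {a} \<and> card S = j}" by auto
  thus without: "card {S. S \<subseteq> A \<and> card S = j \<and> a \<notin> S} = (card A - 1) choose j"
    using assms by (simp add: n_subsets)
  have "{S. S \<subseteq> A \<and> card S = j} = {S. S \<subseteq> A \<and> card S = j \<and> a \<in> S} \<union> {S. S \<subseteq> A \<and> card S = j \<and> a \<notin> S}"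
    by auto
  hence "card A choose j = card {S. S \<subseteq> A \<and> card S = j \<and> a \<in> S} + ((card A - 1) choose j)"
    using assms(1) n_subsets[OF assms(1), of j] without by (simp add: card_Un_disjoint disjoint_iff)
  moreover have "card A choose j = ((card A - 1) choose (j - 1)) + ((card A - 1) choose j)"
    using choose_reduce_nat[of "card A" j] assms card_gt_0_iff by fastforce
  ultimately show "card {S. S \<subseteq> A \<and> card S = j \<and> a \<in> S} = (card A - 1) choose (j - 1)" by simp
qed

lemma card_johnson_neighbours_separating:
  assumes X: "X \<in> johnson_vertices n k" and "1 \<le> j"
    and a: "a \<in> X" and b: "b \<in> {1..n} - X"
  shows "card {Y \<in> johnson_vertices n k. johnson_adj j X Y \<and> (a \<in> Y) \<noteq> (b \<in> Y)}
    = ((k - 1) choose (j - 1)) * ((n - k - 1) choose (j - 1)) + ((k - 1) choose j) * ((n - k - 1) choose j)"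
proof -
  let ?V = "johnson_vertices n k"
  have fX: "finite X" and cX: "card X = k" and XU: "X \<subseteq> {1..n}"
    using X finite_johnson_vertex by (auto simp: mem_johnson_vertices)
  have cUX: "card ({1..n} - X) = n - k" using XU cX fX by (simp add: card_Diff_subset)
  let ?N1 = "{Y \<in> ?V. johnson_adj j X Y \<and> a \<in> X - Y \<and> b \<in> Y - X}"
  let ?N2 = "{Y \<in> ?V. johnson_adj j X Y \<and> a \<notin> X - Y \<and> b \<notin> Y - X}"
  have "{Y \<in> ?V. johnson_adj j X Y \<and> (a \<in> Y) \<noteq> (b \<in> Y)} = ?N1 \<union> ?N2" using a b by auto
  moreover have "card ?N1 = ((k - 1) choose (j - 1)) * ((n - k - 1) choose (j - 1))"
    using card_johnson_neighbours_with[OF X, of j "\<lambda>S. a \<in> S" "\<lambda>T. b \<in> T"]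
      card_subsets_containing(1)[OF fX a \<open>1 \<le> j\<close>] card_subsets_containing(1)[of _ b j] b \<open>1 \<le> j\<close> cX cUX
    by simp
  moreover have "card ?N2 = ((k - 1) choose j) * ((n - k - 1) choose j)"
    using card_johnson_neighbours_with[OF X, of j "\<lambda>S. a \<notin> S" "\<lambda>T. b \<notin> T"]
      card_subsets_containing(2)[OF fX a \<open>1 \<le> j\<close>] card_subsets_containing(2)[of _ b j] b \<open>1 \<le> j\<close> cX cUX
    by simp
  moreover have "finite ?N1" "finite ?N2" "?N1 \<inter> ?N2 = {}"
    using finite_johnson_vertices by auto
  ultimately show ?thesis by (simp add: card_Un_disjoint)
qed

lemma separating_neighbours_le:
  fixes j k :: nat
  assumes "1 \<le> j" and jk: "8 * j \<le> 7 * k"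
  shows "real (((k - 1) choose (j - 1))\<^sup>2 + ((k - 1) choose j)\<^sup>2)
    \<le> (1 - real j / (4 * real k)) * real ((k choose j)\<^sup>2)"
proof -
  define B where "B = real (k choose j)"
  define K where "K = real k"
  define J where "J = real j"
  have K0: "K > 0" unfolding K_def using assms by simp
  have x: "K * real ((k - 1) choose (j - 1)) = J * B"
    using times_binomial_minus1_eq[of j k] assms unfolding K_def J_def B_def by (simp flip: of_nat_mult)
  have "real ((k - j) * (k choose j)) = real (k * ((k - 1) choose j))"
    by (simp only: binomial_absorb_comp)
  moreover have "real (k - j) = K - J" using jk unfolding K_def J_def by simp
  ultimately have y: "K * real ((k - 1) choose j) = (K - J) * B"
    unfolding K_def B_def by simp
  have "8 * J \<le> 7 * K" using of_nat_mono[OF jk] unfolding J_def K_def by simp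
  hence "J * (8 * J) \<le> J * (7 * K)" unfolding J_def by (intro mult_left_mono) auto
  hence ineq: "J\<^sup>2 + (K - J)\<^sup>2 \<le> K\<^sup>2 - J * K / 4" by (simp add: power2_eq_square algebra_simps)
  have "K\<^sup>2 * ((real ((k - 1) choose (j - 1)))\<^sup>2 + (real ((k - 1) choose j))\<^sup>2)
      = (J\<^sup>2 + (K - J)\<^sup>2) * B\<^sup>2"
    by (simp only: distrib_left distrib_right power_mult_distrib[symmetric] x y)
  also have "\<dots> \<le> (K\<^sup>2 - J * K / 4) * B\<^sup>2" by (rule mult_right_mono[OF ineq]) simp
  also have "\<dots> = K\<^sup>2 * ((1 - J / (4 * K)) * B\<^sup>2)"
    using K0 by (simp add: power2_eq_square algebra_simps)
  finally have "K\<^sup>2 * ((real ((k - 1) choose (j - 1)))\<^sup>2 + (real ((k - 1) choose j))\<^sup>2)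
      \<le> K\<^sup>2 * ((1 - J / (4 * K)) * B\<^sup>2)" .
  thus ?thesis using K0 unfolding B_def J_def K_def by (simp add: mult_le_cancel_left_pos)
qed

lemma transpose_image_involution:
  "Transposition.transpose a b ` Transposition.transpose a b ` Z = Z"
  by (simp add: image_comp)

lemma symdiff_transpose_image:
  "symdiff (Transposition.transpose a b ` Z) (Transposition.transpose a b ` W)
    = Transposition.transpose a b ` symdiff Z W"
  unfolding symdiff_def by (simp add: image_Un image_set_diff)

lemma transpose_image_eq_self: "(a \<in> Z) = (b \<in> Z) \<Longrightarrow> Transposition.transpose a b ` Z = Z"
  by (auto simp: in_transpose_image_iff transpose_def split: if_splits)

lemma card_Diff_transpose_image:
  assumes "(a \<in> Z) \<noteq> (b \<in> Z)"
  shows "card (Z - Transposition.transpose a b ` Z) = 1"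
proof -
  have "Z - Transposition.transpose a b ` Z = (if a \<in> Z then {a} else {b})"
    using assms by (auto simp: in_transpose_image_iff transpose_def split: if_splits)
  thus ?thesis by simp
qed

lemma transpose_image_swap:
  assumes "X - Y = {a}" "Y - X = {b}"
  shows "Transposition.transpose a b ` X = Y"
  using assms by (auto simp: in_transpose_image_iff transpose_def split: if_splits)

lemma transpose_image_johnson_vertices:
  assumes "Z \<in> johnson_vertices n k" "a \<in> {1..n}" "b \<in> {1..n}"
  shows "Transposition.transpose a b ` Z \<in> johnson_vertices n k"
proof -
  have "Transposition.transpose a b ` Z \<subseteq> {1..n}"
    using assms by (auto simp: mem_johnson_vertices transpose_def)
  moreover have "card (Transposition.transpose a b ` Z) = card Z" by (simp add: card_image)
  ultimately show ?thesis using assms(1) by (simp add: mem_johnson_vertices)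
qed

lemma johnson_adj_transpose_image:
  "johnson_adj j (Transposition.transpose a b ` Z) (Transposition.transpose a b ` W) \<longleftrightarrow> johnson_adj j Z W"
  unfolding johnson_adj_def symdiff_transpose_image by (simp add: card_image)

section \<open>The spectral gap of \<open>J(2k, k, j)\<close>\<close>

lemma regular_graph_johnson:
  assumes "j \<le> k" "j \<le> n - k"
  shows "regular_graph (johnson_vertices n k) (johnson_adj j) ((k choose j) * ((n - k) choose j))"
  using assms by unfold_locales (auto simp: finite_johnson_vertices johnson_adj_commute johnson_degree)

lemma johnson_norm_laplacian_eq:
  "n = 2 * k \<Longrightarrow>
    johnson_norm_laplacian n j = norm_laplacian (johnson_adj j) ((k choose j) * ((n - k) choose j))"
  unfolding johnson_norm_laplacian_def norm_laplacian_def johnson_adjmat_def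
  by (intro ext) (simp add: power2_eq_square)

lemma johnson_neighbours_transpose:
  assumes "X - Y = {a}" "Y - X = {b}" "a \<in> {1..n}" "b \<in> {1..n}"
  shows "bij_betw ((`) (Transposition.transpose a b))
    {Z \<in> johnson_vertices n k. johnson_adj j X Z} {Z \<in> johnson_vertices n k. johnson_adj j Y Z}"
proof (rule bij_betw_byWitness[where f' = "(`) (Transposition.transpose a b)"])
  have XY: "Transposition.transpose a b ` X = Y" and YX: "Transposition.transpose a b ` Y = X"
    using transpose_image_swap[OF assms(1,2)] transpose_image_involution by metis+
  show "(`) (Transposition.transpose a b) ` {Z \<in> johnson_vertices n k. johnson_adj j X Z}
      \<subseteq> {Z \<in> johnson_vertices n k. johnson_adj j Y Z}"
    using assms(3,4) johnson_adj_transpose_image[of j a b X] transpose_image_johnson_vertices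
    unfolding XY by auto
  show "(`) (Transposition.transpose a b) ` {Z \<in> johnson_vertices n k. johnson_adj j Y Z}
      \<subseteq> {Z \<in> johnson_vertices n k. johnson_adj j X Z}"
    using assms(3,4) johnson_adj_transpose_image[of j a b Y] transpose_image_johnson_vertices
    unfolding YX by auto
qed (simp_all add: transpose_image_involution)

lemma johnson_eigenfunction_transpose_bound:
  fixes u :: "nat set \<Rightarrow> real"
  assumes n: "n = 2 * k" and j: "1 \<le> j" "8 * j \<le> 7 * k"
    and eig: "\<And>X. X \<in> johnson_vertices n k \<Longrightarrow>
      (\<Sum>Y\<in>{Y \<in> johnson_vertices n k. johnson_adj j X Y}. u Y) = \<theta> * u X"
    and X: "X \<in> johnson_vertices n k" and Y: "Y \<in> johnson_vertices n k"
    and a: "X - Y = {a}" and b: "Y - X = {b}"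
    and M: "\<And>Z. Z \<in> johnson_vertices n k \<Longrightarrow> \<bar>u Z - u (Transposition.transpose a b ` Z)\<bar> \<le> M"
  shows "\<bar>\<theta>\<bar> * \<bar>u X - u Y\<bar> \<le> (1 - real j / (4 * real k)) * real ((k choose j)\<^sup>2) * M"
proof -
  let ?\<tau> = "Transposition.transpose a b"
  define N where "N X = {Y \<in> johnson_vertices n k. johnson_adj j X Y}" for X
  have ab: "a \<in> X" "b \<in> {1..n} - X" using a b Y by (auto simp: mem_johnson_vertices)
  have "bij_betw ((`) ?\<tau>) (N X) (N Y)"
    unfolding N_def using ab X by (intro johnson_neighbours_transpose[OF a b]) (auto simp: mem_johnson_vertices)
  hence "\<theta> * (u X - u Y) = (\<Sum>Z\<in>N X. u Z - u (?\<tau> ` Z))"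
    using eig[OF X] eig[OF Y] unfolding N_def
    by (simp add: right_diff_distrib sum_subtractf sum.reindex_bij_betw)
  hence "\<bar>\<theta>\<bar> * \<bar>u X - u Y\<bar> = \<bar>\<Sum>Z\<in>N X. u Z - u (?\<tau> ` Z)\<bar>"
    by (metis abs_mult)
  \<comment> \<open>Only neighbours separating \<open>a\<close> from \<open>b\<close> are moved by \<open>\<tau>\<close>.\<close>
  also have "\<dots> \<le> (\<Sum>Z\<in>N X. if (a \<in> Z) \<noteq> (b \<in> Z) then M else 0)"
    using M transpose_image_eq_self unfolding N_def
    by (intro order.trans[OF sum_abs] sum_mono) auto
  also have "\<dots> = M * real (card {Z \<in> N X. (a \<in> Z) \<noteq> (b \<in> Z)})"
    using finite_johnson_vertices unfolding N_def by (simp add: sum.If_cases Int_def conj_commute)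
  also have "card {Z \<in> N X. (a \<in> Z) \<noteq> (b \<in> Z)} = ((k - 1) choose (j - 1))\<^sup>2 + ((k - 1) choose j)\<^sup>2"
    using card_johnson_neighbours_separating[OF X j(1) ab] n
    unfolding N_def by (simp add: conj_assoc power2_eq_square)
  also have "M * real (((k - 1) choose (j - 1))\<^sup>2 + ((k - 1) choose j)\<^sup>2)
      \<le> M * ((1 - real j / (4 * real k)) * real ((k choose j)\<^sup>2))"
    using M[OF X] separating_neighbours_le[OF j] by (intro mult_left_mono) auto
  finally show ?thesis by (simp add: mult_ac)
qed

lemma johnson_eigenfunction_swap_invariant:
  fixes u :: "nat set \<Rightarrow> real"
  assumes n: "n = 2 * k" and j: "1 \<le> j" "8 * j \<le> 7 * k"
    and eig: "\<And>X. X \<in> johnson_vertices n k \<Longrightarrow>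
      (\<Sum>Y\<in>{Y \<in> johnson_vertices n k. johnson_adj j X Y}. u Y) = \<theta> * u X"
    and large: "\<theta> > (1 - real j / (4 * real k)) * real ((k choose j)\<^sup>2)"
    and X: "X \<in> johnson_vertices n k" and Y: "Y \<in> johnson_vertices n k" and XY: "card (X - Y) = 1"
  shows "u X = u Y"
proof -
  let ?V = "johnson_vertices n k"
  define D where "D = {(Z, W) \<in> ?V \<times> ?V. card (Z - W) = 1}"
  define M where "M = Max ((\<lambda>(Z, W). \<bar>u Z - u W\<bar>) ` D)"
  have finD: "finite D"
    unfolding D_def by (rule finite_subset[of _ "?V \<times> ?V"]) (auto simp: finite_johnson_vertices)
  have XYD: "(X, Y) \<in> D" unfolding D_def using X Y XY by auto
  have M_ge: "\<bar>u Z - u W\<bar> \<le> M" if "(Z, W) \<in> D" for Z W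
    unfolding M_def using finD that by (intro Max_ge) force+
  \<comment> \<open>For a pair at distance one with maximal difference \<open>M\<close>, the previous lemma gives
    \<open>\<theta> M \<le> (1 - j/(4k)) C(k, j)\<^sup>2 M\<close>, which forces \<open>M = 0\<close>.\<close>
  obtain X0 Y0 where p: "(X0, Y0) \<in> D" and M_eq: "\<bar>u X0 - u Y0\<bar> = M"
    using Max_in[of "(\<lambda>(Z, W). \<bar>u Z - u W\<bar>) ` D"] finD XYD unfolding M_def by fastforce
  hence X0: "X0 \<in> ?V" and Y0: "Y0 \<in> ?V" and "card (X0 - Y0) = 1" unfolding D_def by auto
  moreover have "card (Y0 - X0) = card (X0 - Y0)"
    using X0 Y0 by (intro card_Diff_commute finite_johnson_vertex) (auto simp: mem_johnson_vertices)
  ultimately obtain a b where a: "X0 - Y0 = {a}" and b: "Y0 - X0 = {b}" by (metis card_1_singletonE)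
  have "\<bar>u Z - u (Transposition.transpose a b ` Z)\<bar> \<le> M" if Z: "Z \<in> ?V" for Z
  proof (cases "(a \<in> Z) = (b \<in> Z)")
    case True
    thus ?thesis using M_ge[OF XYD] by (simp add: transpose_image_eq_self)
  next
    case False
    have "a \<in> {1..n}" "b \<in> {1..n}" using a b X0 Y0 by (auto simp: mem_johnson_vertices)
    with False Z have "(Z, Transposition.transpose a b ` Z) \<in> D"
      unfolding D_def by (auto simp: card_Diff_transpose_image transpose_image_johnson_vertices)
    thus ?thesis by (rule M_ge)
  qed
  from johnson_eigenfunction_transpose_bound[OF n j eig X0 Y0 a b this]
  have "(\<bar>\<theta>\<bar> - (1 - real j / (4 * real k)) * real ((k choose j)\<^sup>2)) * M \<le> 0"
    unfolding M_eq by (simp add: algebra_simps)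
  moreover have "\<bar>\<theta>\<bar> - (1 - real j / (4 * real k)) * real ((k choose j)\<^sup>2) > 0"
    using large by linarith
  ultimately have "M \<le> 0" by (simp add: mult_le_0_iff)
  thus ?thesis using M_ge[OF XYD] by simp
qed

lemma johnson_swap_invariant_constant:
  fixes u :: "nat set \<Rightarrow> 'b"
  assumes swap: "\<And>X Y. X \<in> johnson_vertices n k \<Longrightarrow> Y \<in> johnson_vertices n k \<Longrightarrow>
      card (X - Y) = 1 \<Longrightarrow> u X = u Y"
    and X: "X \<in> johnson_vertices n k" and Y: "Y \<in> johnson_vertices n k"
  shows "u X = u Y"
  using X
proof (induction "card (X - Y)" arbitrary: X)
  case 0
  hence "X \<subseteq> Y" using finite_johnson_vertex by auto
  with 0 Y have "X = Y"
    by (metis card_subset_eq finite_johnson_vertex mem_johnson_vertices)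
  thus ?case by simp
next
  case (Suc m)
  have "card (Y - X) = card (X - Y)"
    using Suc.prems Y by (intro card_Diff_commute finite_johnson_vertex) (auto simp: mem_johnson_vertices)
  then obtain a b where a: "a \<in> X - Y" and b: "b \<in> Y - X"
    using Suc.hyps(2) by (metis card.empty ex_in_conv nat.distinct(1))
  define X' where "X' = Transposition.transpose a b ` X"
  have X': "X' \<in> johnson_vertices n k"
    unfolding X'_def using Suc.prems Y a b by (intro transpose_image_johnson_vertices) (auto simp: mem_johnson_vertices)
  have "u X = u X'"
    using swap[OF Suc.prems X'] a b unfolding X'_def by (simp add: card_Diff_transpose_image)
  moreover have "X' - Y = (X - Y) - {a}"
    unfolding X'_def using a b by (auto simp: in_transpose_image_iff transpose_def)
  hence "m = card (X' - Y)" using Suc.hyps(2) a finite_johnson_vertex[OF Suc.prems] by simp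
  ultimately show ?case using Suc.hyps(1)[OF _ X'] by simp
qed

lemma johnson_norm_laplacian_commute: "johnson_norm_laplacian n j X Y = johnson_norm_laplacian n j Y X"
  unfolding johnson_norm_laplacian_def johnson_adjmat_def by (auto simp: johnson_adj_commute)

lemma johnson_low_eigenfunction_constant:
  fixes u :: "nat set \<Rightarrow> real"
  assumes n: "n = 2 * k" and j: "1 \<le> j" "8 * j \<le> 7 * k" and e: "e < real j / (4 * real k)"
    and eig: "\<And>X. X \<in> johnson_vertices n k \<Longrightarrow>
      (\<Sum>Y\<in>johnson_vertices n k. johnson_norm_laplacian n j X Y * u Y) = e * u X"
    and X: "X \<in> johnson_vertices n k" and Y: "Y \<in> johnson_vertices n k"
  shows "u X = u Y"
proof -
  define d where "d = (k choose j) * (k choose j)"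
  interpret regular_graph "johnson_vertices n k" "johnson_adj j" d
    using regular_graph_johnson[of j k n] j n unfolding d_def by simp
  have L: "johnson_norm_laplacian n j = laplacian" using johnson_norm_laplacian_eq[OF n] n unfolding d_def by simp
  have adj_eig: "(\<Sum>Z\<in>{Z \<in> johnson_vertices n k. johnson_adj j X Z}. u Z) = real d * (1 - e) * u X"
    if "X \<in> johnson_vertices n k" for X
    using laplacian_apply[OF that, of u] eig[OF that] deg_pos finite_vertices
    unfolding L by (simp add: field_simps)
  have large: "real d * (1 - e) > (1 - real j / (4 * real k)) * real ((k choose j)\<^sup>2)"
    using e deg_pos unfolding d_def by (simp add: power2_eq_square mult_strict_left_mono)
  show ?thesis
    by (rule johnson_swap_invariant_constant[OF _ X Y])
      (rule johnson_eigenfunction_swap_invariant[OF n j adj_eig large])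
qed

theorem johnson_second_eigenvalue_ge:
  assumes n: "n = 2 * k" and j: "1 \<le> j" "8 * j \<le> 7 * k"
  shows "mu2_tilde n j \<ge> real j / (4 * real k)"
proof -
  have "card (johnson_vertices n k) \<ge> 2" using n j by (intro card_johnson_vertices_ge_2) auto
  hence "eigenvalues_sorted (johnson_vertices n k) (johnson_norm_laplacian n j) ! 1 \<ge> real j / (4 * real k)"
    using johnson_low_eigenfunction_constant[OF n j]
    by (intro second_eigenvalue_ge finite_johnson_vertices johnson_norm_laplacian_commute) blast+
  thus ?thesis unfolding mu2_tilde_def using n by simp
qed

section \<open>Edge expansion of \<open>J(n, n/2, j)\<close>\<close>

lemma card_johnson_ordered_cut:
  assumes "\<A> \<subseteq> johnson_vertices n k"
  shows "card {(A, B) \<in> johnson_vertices n k \<times> johnson_vertices n k. johnson_adj j A B \<and> A \<in> \<A> \<and> B \<notin> \<A>}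
    = johnson_e n k j \<A> (johnson_vertices n k - \<A>)"
proof -
  let ?V = "johnson_vertices n k"
  let ?S = "{(A, B) \<in> ?V \<times> ?V. johnson_adj j A B \<and> A \<in> \<A> \<and> B \<notin> \<A>}"
  let ?E = "{e \<in> johnson_edges n k j. \<exists>A\<in>\<A>. \<exists>B\<in>?V - \<A>. e = {A, B}}"
  \<comment> \<open>An edge meeting both \<open>\<A>\<close> and its complement determines its orientation.\<close>
  have "bij_betw (\<lambda>(A, B). {A, B}) ?S ?E"
  proof (rule bij_betw_imageI)
    show "inj_on (\<lambda>(A, B). {A, B}) ?S"
      by (rule inj_onI) (auto simp: doubleton_eq_iff)
    show "(\<lambda>(A, B). {A, B}) ` ?S = ?E"
    proof
      show "(\<lambda>(A, B). {A, B}) ` ?S \<subseteq> ?E" by (auto simp: johnson_edges_def)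
      show "?E \<subseteq> (\<lambda>(A, B). {A, B}) ` ?S"
      proof
        fix e assume "e \<in> ?E"
        then obtain A B A0 B0 where A: "A \<in> \<A>" and B: "B \<in> ?V - \<A>" and e: "e = {A, B}"
          and e0: "e = {A0, B0}" and adj: "johnson_adj j A0 B0"
          by (auto simp: johnson_edges_def)
        have "johnson_adj j A B"
          using e e0 adj by (auto simp: doubleton_eq_iff johnson_adj_commute)
        hence "(A, B) \<in> ?S" using A B assms by auto
        thus "e \<in> (\<lambda>(A, B). {A, B}) ` ?S" using e by force
      qed
    qed
  qed
  thus ?thesis unfolding johnson_e_def by (rule bij_betw_same_card)
qed

lemma card_johnson_adjacent_pairs:
  assumes "j \<le> k" and "j \<le> n - k"
  shows "card {(A, B) \<in> johnson_vertices n k \<times> johnson_vertices n k. johnson_adj j A B}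
    = (n choose k) * ((k choose j) * ((n - k) choose j))"
  using regular_graph.card_adjacent_pairs[OF regular_graph_johnson[OF assms]]
  by (simp add: card_johnson_vertices)

theorem johnson_edge_expansion:
  fixes \<A> :: "nat set set"
  assumes n: "n = 2 * k" and j: "1 \<le> j" "8 * j \<le> 7 * k" and \<A>: "\<A> \<subseteq> johnson_vertices n k"
  defines "\<mu> \<equiv> real (card \<A>) / real (n choose k)"
  shows "real (card {(A, B) \<in> johnson_vertices n k \<times> johnson_vertices n k.
      johnson_adj j A B \<and> A \<in> \<A> \<and> B \<notin> \<A>})
    \<ge> real ((k choose j)\<^sup>2) * mu2_tilde n j * \<mu> * (1 - \<mu>) * real (n choose k)"
proof -
  interpret regular_graph "johnson_vertices n k" "johnson_adj j" "(k choose j) * (k choose j)"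
    using regular_graph_johnson[of j k n] j n by simp
  have "eigenvalues_sorted (johnson_vertices n k) laplacian ! 1 = mu2_tilde n j"
    unfolding mu2_tilde_def using johnson_norm_laplacian_eq[OF n] n by simp
  moreover have "0 < real j / (4 * real k)" using j by simp
  hence "mu2_tilde n j > 0" using johnson_second_eigenvalue_ge[OF n j] by linarith
  ultimately show ?thesis
    using cut_ge_second_eigenvalue[OF \<A>]
    unfolding \<mu>_def card_johnson_vertices by (simp add: power2_eq_square)
qed

theorem corollary3:
  fixes n j :: nat and \<A> :: "nat set set"
  assumes "even n" and "n > 0" and "j > 0"
    and "real j / real n \<le> 1/10"
    and "\<A> \<subseteq> johnson_vertices n (n div 2)"
  defines "V \<equiv> johnson_vertices n (n div 2)"
    and "d \<equiv> real (((n div 2) choose j)^2)"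
    and "\<eta> \<equiv> real j / real n"
    and "\<mu> \<equiv> real (card \<A>) / real (n choose (n div 2))"
  shows "card {(A, B) \<in> V \<times> V. card (symdiff A B) = 2 * j \<and> A \<in> \<A> \<and> B \<notin> \<A>}
           = johnson_e n (n div 2) j \<A> (V - \<A>)
       \<and> real (johnson_e n (n div 2) j \<A> (V - \<A>))
           \<ge> d * mu2_tilde n j * \<mu> * (1 - \<mu>) * real (n choose (n div 2))
       \<and> d * mu2_tilde n j * \<mu> * (1 - \<mu>) * real (n choose (n div 2))
           \<ge> 1/2 * \<eta> * \<mu> * (1 - \<mu>) * d * real (n choose (n div 2))
       \<and> real (card {(A, B) \<in> V \<times> V. card (symdiff A B) = 2 * j \<and> A \<in> \<A> \<and> B \<notin> \<A>})
           / real (card {(A, B) \<in> V \<times> V. card (symdiff A B) = 2 * j})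
           \<ge> 1/2 * \<eta> * \<mu> * (1 - \<mu>)"
proof -
  define k where "k = n div 2"
  have n: "n = 2 * k" using \<open>even n\<close> unfolding k_def by simp
  have j: "1 \<le> j" "8 * j \<le> 7 * k" using assms(2-4) n by (simp_all add: field_simps)
  have V: "V = johnson_vertices n k" and N: "n div 2 = k" and d: "d = real ((k choose j)\<^sup>2)"
    unfolding V_def d_def k_def by simp_all
  have edges: "card {(A, B) \<in> V \<times> V. card (symdiff A B) = 2 * j \<and> A \<in> \<A> \<and> B \<notin> \<A>}
      = johnson_e n (n div 2) j \<A> (V - \<A>)"
    using card_johnson_ordered_cut[OF assms(5)] unfolding V_def johnson_adj_def .
  have cut: "real (johnson_e n (n div 2) j \<A> (V - \<A>))
      \<ge> d * mu2_tilde n j * \<mu> * (1 - \<mu>) * real (n choose (n div 2))"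
    using johnson_edge_expansion[OF n j assms(5)[unfolded N]] edges
    unfolding V N d \<mu>_def johnson_adj_def by simp
  have pairs: "real (card {(A, B) \<in> V \<times> V. card (symdiff A B) = 2 * j})
      = real (n choose (n div 2)) * d"
    using card_johnson_adjacent_pairs[of j k n] j n unfolding V N d johnson_adj_def
    by (simp add: power2_eq_square)
  have nonneg: "0 \<le> \<mu> * (1 - \<mu>) * d * real (n choose (n div 2))"
    using card_mono[OF finite_johnson_vertices assms(5)]
    unfolding \<mu>_def d_def by (auto simp: card_johnson_vertices divide_le_eq_1)
  have "\<eta> / 2 \<le> mu2_tilde n j"
    using johnson_second_eigenvalue_ge[OF n j] n unfolding \<eta>_def by simp
  from mult_right_mono[OF this nonneg]
  have expansion: "d * mu2_tilde n j * \<mu> * (1 - \<mu>) * real (n choose (n div 2))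
      \<ge> 1/2 * \<eta> * \<mu> * (1 - \<mu>) * d * real (n choose (n div 2))"
    by (simp add: mult_ac)
  have "real (n choose (n div 2)) * d > 0" using j n unfolding d by simp
  with cut edges pairs expansion show ?thesis by (simp add: pos_le_divide_eq mult_ac)
qed

end
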